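(* Let $M\ge2$, $K\ge1$ be integers and let $\gamma_{0d},\sigma_{0d},\gamma_{0r},\sigma_{0r},\gamma_{rd},\sigma_{rd}>0$ ($r=1,\dots,K$) be constants. A message $m\in\{0,\dots,M-1\}$ is encoded as $\mathbf{s}=[s(l-1),s(l)]^T$ with $|s(l-1)|=1$ ($s(l-1)$ known and independent of $m$) and $s(l)=s(l-1)e^{j2\pi m/M}$. The destination observes $$\mathbf{y}_{0d}=\sigma_{0d}\big(\sqrt{\gamma_{0d}}\,h_{0d}\mathbf{s}+\mathbf{n}_{0d}\big),\qquad \mathbf{y}_{rd}=\sigma_{0r}\sigma_{rd}\sqrt{\gamma_{0r}\gamma_{rd}}\,h_{0r}h_{rd}\mathbf{s}+\sigma_{0r}\sigma_{rd}\sqrt{\gamma_{rd}}\,h_{rd}\mathbf{n}_{0r}+\sigma_{rd}\mathbf{n}_{rd},\quad r=1,\dots,K,$$ where $\mathbf{y}_{ij}=[y_{ij}(l-1),y_{ij}(l)]^T$, the scalars $h_{0d},h_{0r},h_{rd}\sim\mathcal{CN}(0,1)$ and the vectors $\mathbf{n}_{0d},\mathbf{n}_{0r},\mathbf{n}_{rd}\sim\mathcal{CN}(\mathbf{0},\mathbf{I}_2)$ ($r=1,\dots,K$) are all mutually independent and independent of $m$. Then the maximum-likelihood detector of $m$ from $(\mathbf{y}_{0d},\mathbf{y}_{1d},\dots,\mathbf{y}_{Kd})$, i.e. $\hat m=\arg\max_m f(\mathbf{y}_{0d},\mathbf{y}_{1d},\dots,\mathbf{y}_{Kd}\mid m)$,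 is equivalently $$\hat m=\arg\max_{m\in\{0,\dots,M-1\}}\Bigg\{\frac{2\gamma_{0d}}{1+2\gamma_{0d}}\frac{\Re\{y_{0d}(l-1)y_{0d}^*(l)e^{j2\pi m/M}\}}{\sigma_{0d}^2}+\sum_{r=1}^K\ln I\Big(\sigma_{0r}^2\gamma_{rd},\ (1+2\gamma_{0r})\sigma_{0r}^2\gamma_{rd},\ \frac{|y_{rd}(l)-y_{rd}(l-1)e^{j2\pi m/M}|^2}{2\sigma_{rd}^2},\ \frac{|y_{rd}(l)+y_{rd}(l-1)e^{j2\pi m/M}|^2}{2\sigma_{rd}^2},\ 1\Big)\Bigg\}.$$
   Context: $\mathcal{CN}(\boldsymbol{\mu},\boldsymbol{\Sigma})$ denotes a circularly symmetric complex Gaussian distribution; $\Re$ is real part, $^*$ complex conjugate. For $\epsilon_1,\epsilon_2>0$, $\beta_1,\beta_2\ge 0$, $\lambda>0$, $$I(\epsilon_1,\epsilon_2,\beta_1,\beta_2,\lambda)=\int_0^\infty \frac{\exp\!\Big[-\Big(x+\frac{\beta_1}{1+\epsilon_1x}+\frac{\beta_2}{1+\epsilon_2x}\Big)\Big]}{(1+\epsilon_1x)^{\lambda}(1+\epsilon_2x)}\,dx.$$ (This model covers both the power-splitting and time-switching noncoherent amplify-and-forward energy-harvesting relay protocols via appropriate choices of the constants $\gamma,\sigma$.) *)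

theory Defs
  imports "HOL-Probability.Probability"
begin

definition cn_std :: "complex measure" where
  "cn_std = density lborel (\<lambda>z. ennreal (exp (- ((cmod z)^2)) / pi))"

text \<open>Random quantities attached to one link index i, all independent:
  (h1, h2, n1, n2) with h1, h2 ~ CN(0,1) and n1, n2 ~ CN(0, I_2).
  Index 0 (direct link): h_0d = h1, n_0d = n1 (h2, n2 unused).
  Index r >= 1 (relay r): h_0r = h1, h_rd = h2, n_0r = n1, n_rd = n2.\<close>
definition link_noise :: "(complex \<times> complex \<times> (complex \<times> complex) \<times> (complex \<times> complex)) measure" where
  "link_noise = cn_std \<Otimes>\<^sub>M (cn_std \<Otimes>\<^sub>M ((cn_std \<Otimes>\<^sub>M cn_std) \<Otimes>\<^sub>M (cn_std \<Otimes>\<^sub>M cn_std)))"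

text \<open>Complex scalar times a vector of C^2 (pair (first = time l-1, second = time l)).\<close>
definition csc :: "complex \<Rightarrow> complex \<times> complex \<Rightarrow> complex \<times> complex" where
  "csc c v = (c * fst v, c * snd v)"

definition symb :: "nat \<Rightarrow> complex \<Rightarrow> nat \<Rightarrow> complex \<times> complex" where
  "symb M s0 m = (s0, s0 * cis (2 * pi * real m / real M))"

text \<open>Observations at the destination: index 0 is y_0d, index r in {1..K} is y_rd.\<close>
definition obs ::
  "nat \<Rightarrow> nat \<Rightarrow> complex \<Rightarrow> real \<Rightarrow> real \<Rightarrow> (nat \<Rightarrow> real) \<Rightarrow> (nat \<Rightarrow> real)
   \<Rightarrow> (nat \<Rightarrow> real) \<Rightarrow> (nat \<Rightarrow> real) \<Rightarrow> nat
   \<Rightarrow> (nat \<Rightarrow> complex \<times> complex \<times> (complex \<times> complex) \<times> (complex \<times> complex))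
   \<Rightarrow> (nat \<Rightarrow> complex \<times> complex)" where
  "obs M K s0 g0d s0d g0r s0r grd srd m \<omega> =
     (\<lambda>i\<in>{0..K}. case \<omega> i of (h1, h2, n1, n2) \<Rightarrow>
        if i = 0 then
          csc (complex_of_real s0d) (csc (complex_of_real (sqrt g0d) * h1) (symb M s0 m) + n1)
        else
          csc (complex_of_real (s0r i * srd i * sqrt (g0r i * grd i)) * h1 * h2) (symb M s0 m)
          + csc (complex_of_real (s0r i * srd i * sqrt (grd i)) * h2) n1
          + csc (complex_of_real (srd i)) n2)"

definition Ifun :: "real \<Rightarrow> real \<Rightarrow> real \<Rightarrow> real \<Rightarrow> real \<Rightarrow> real" where
  "Ifun e1 e2 b1 b2 lam =
     (LBINT x:{0..}. exp (- (x + b1 / (1 + e1 * x) + b2 / (1 + e2 * x)))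
                     / ((1 + e1 * x) powr lam * (1 + e2 * x)))"

definition metric ::
  "nat \<Rightarrow> nat \<Rightarrow> real \<Rightarrow> real \<Rightarrow> (nat \<Rightarrow> real) \<Rightarrow> (nat \<Rightarrow> real)
   \<Rightarrow> (nat \<Rightarrow> real) \<Rightarrow> (nat \<Rightarrow> real) \<Rightarrow> nat \<Rightarrow> (nat \<Rightarrow> complex \<times> complex) \<Rightarrow> real" where
  "metric M K g0d s0d g0r s0r grd srd m y =
     (let e = cis (2 * pi * real m / real M) in
      2 * g0d / (1 + 2 * g0d) * Re (fst (y 0) * cnj (snd (y 0)) * e) / s0d^2
      + (\<Sum>r = 1..K. ln (Ifun ((s0r r)^2 * grd r) ((1 + 2 * g0r r) * (s0r r)^2 * grd r)
                        ((cmod (snd (y r) - fst (y r) * e))^2 / (2 * (srd r)^2))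
                        ((cmod (snd (y r) + fst (y r) * e))^2 / (2 * (srd r)^2))
                        1)))"

end

theory Submission
  imports Defs
begin

text \<open>Conditionally on the fading coefficients every observation is Gaussian, so each link density is
  an average of Gaussian densities. For the direct link the average over \<open>h_0d\<close> is a Gaussian
  integral over the complex plane; it leaves a density whose only dependence on \<open>m\<close> is the factor
  \<open>exp (2 g0d / (1 + 2 g0d) * Re (y_0d(l-1) * cnj (y_0d(l)) * e^(j 2 pi m / M)) / s0d^2)\<close>. For relay \<open>r\<close>,
  given \<open>h_rd\<close> the noises \<open>n_rd\<close>, \<open>n_0r\<close> and the fading \<open>h_0r\<close> can again be integrated out in closed
  form; the remaining average over \<open>h_rd\<close> only involves \<open>x = |h_rd|^2\<close>, which is exponentially
  distributed, and produces \<open>I(..., 1) / (pi^2 srd^4)\<close>. The links are independent, so the likelihood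
  is the product of these densities: a positive factor independent of \<open>m\<close> times the exponential of
  the metric. Densities are unique only almost everywhere, hence the arg max sets agree almost
  everywhere.\<close>

section \<open>Gaussian integrals over the complex plane\<close>

lemma borel_measurable_cnj[measurable]: "cnj \<in> borel_measurable borel"
  by (intro borel_measurable_continuous_onI continuous_intros)

lemma emeasure_lborel_cmod_power2_atMost:
  "emeasure (lborel::complex measure) ((\<lambda>z. (cmod z)^2) -` {..a}) = ennreal (pi * max a 0)"
proof (cases "a \<ge> 0")
  case True
  have "(\<lambda>z::complex. (cmod z)^2) -` {..a} = cball 0 (sqrt a)"
    using True by (auto intro: real_le_rsqrt) (metis norm_ge_zero power_mono real_sqrt_pow2)
  then show ?thesis
    using True by (simp add: emeasure_cball unit_ball_vol_2)
next
  case False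
  then have "(\<lambda>z::complex. (cmod z)^2) -` {..a} = {}"
    by auto (smt (verit) zero_le_power2)
  then show ?thesis
    using False by simp
qed

lemma distr_lborel_cmod_power2:
  "distr (lborel::complex measure) borel (\<lambda>z. (cmod z)^2) = density lborel (\<lambda>x. ennreal pi * indicator {0..} x)"
proof (rule measure_eqI_generator_eq_countable[where E="range atMost" and \<Omega>=UNIV
        and A="range (\<lambda>n::nat. {..real n})"])
  have "sets (borel::real measure) = sigma_sets UNIV (range atMost)"
    by (subst borel_eq_atMost) (rule sets_measure_of, simp)
  then show "sets (distr lborel borel (\<lambda>z::complex. (cmod z)\<^sup>2)) = sigma_sets UNIV (range atMost)"
    and "sets (density lborel (\<lambda>x::real. ennreal pi * indicator {0..} x)) = sigma_sets UNIV (range atMost)"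
    by simp_all
  have distr_atMost: "emeasure (distr (lborel::complex measure) borel (\<lambda>z. (cmod z)^2)) {..a} = ennreal (pi * max a 0)"
    for a :: real
    by (subst emeasure_distr) (auto simp: emeasure_lborel_cmod_power2_atMost)
  have density_atMost:
    "emeasure (density lborel (\<lambda>x. ennreal pi * indicator {0..} x)) {..a} = ennreal (pi * max a 0)" for a :: real
  proof -
    have "emeasure (density lborel (\<lambda>x. ennreal pi * indicator {0..} x)) {..a}
        = (\<integral>\<^sup>+x. ennreal pi * indicator {0..a} x \<partial>lborel)"
      by (subst emeasure_density) (auto intro!: nn_integral_cong split: split_indicator simp: mult_ac)
    also have "\<dots> = ennreal (pi * max a 0)"
      by (cases "a \<ge> 0") (auto simp: nn_integral_cmult_indicator ennreal_mult)
    finally show ?thesis .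
  qed
  show "\<And>X. X \<in> range atMost \<Longrightarrow> emeasure (distr lborel borel (\<lambda>z::complex. (cmod z)\<^sup>2)) X =
          emeasure (density lborel (\<lambda>x::real. ennreal pi * indicator {0..} x)) X"
    using distr_atMost density_atMost by auto
  show "\<And>a. a \<in> range (\<lambda>n::nat. {..real n}) \<Longrightarrow> emeasure (distr lborel borel (\<lambda>z::complex. (cmod z)\<^sup>2)) a \<noteq> \<infinity>"
    using distr_atMost by auto
  show "\<Union> (range (\<lambda>n::nat. {..real n})) = UNIV"
    by (auto intro: real_arch_simple)
qed (auto simp: Int_stable_def)

lemma nn_integral_lborel_cmod_power2:
  fixes \<phi> :: "real \<Rightarrow> ennreal"
  assumes [measurable]: "\<phi> \<in> borel_measurable borel"
  shows "(\<integral>\<^sup>+z. \<phi> ((cmod z)^2) \<partial>(lborel::complex measure)) = (\<integral>\<^sup>+x. ennreal pi * indicator {0..} x * \<phi> x \<partial>lborel)"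
proof -
  have "(\<integral>\<^sup>+z. \<phi> ((cmod z)^2) \<partial>(lborel::complex measure))
      = (\<integral>\<^sup>+x. \<phi> x \<partial>distr (lborel::complex measure) borel (\<lambda>z. (cmod z)^2))"
    by (subst nn_integral_distr) auto
  then show ?thesis
    unfolding distr_lborel_cmod_power2 by (subst (asm) nn_integral_density) auto
qed

lemma nn_integral_exp_neg_atLeast0:
  assumes "p > 0"
  shows "(\<integral>\<^sup>+x. indicator {0..} x * ennreal (exp (- (p * x))) \<partial>lborel) = ennreal (1/p)"
proof -
  interpret prob_space "density lborel (exponential_density p)"
    using prob_space_exponential_density[OF assms] .
  have "1 = (\<integral>\<^sup>+x. ennreal (exponential_density p x) \<partial>lborel)"
    using emeasure_space_1 by (simp add: emeasure_density)
  also have "\<dots> = (\<integral>\<^sup>+x. ennreal p * (indicator {0..} x * ennreal (exp (- (p * x)))) \<partial>lborel)"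
    using assms by (intro nn_integral_cong)
      (auto simp: exponential_density_def ennreal_mult mult_ac split: split_indicator)
  also have "\<dots> = ennreal p * (\<integral>\<^sup>+x. indicator {0..} x * ennreal (exp (- (p * x))) \<partial>lborel)"
    by (rule nn_integral_cmult) auto
  finally have "ennreal (1/p) * 1 = ennreal (1/p) * ennreal p * (\<integral>\<^sup>+x. indicator {0..} x * ennreal (exp (- (p * x))) \<partial>lborel)"
    by (simp add: mult.assoc)
  then show ?thesis
    using assms by (simp add: ennreal_mult[symmetric])
qed

lemma nn_integral_complex_gaussian:
  assumes "p > 0"
  shows "(\<integral>\<^sup>+z. ennreal (exp (- (p * (cmod z)^2))) \<partial>(lborel::complex measure)) = ennreal (pi/p)"
proof -
  have "(\<integral>\<^sup>+z. ennreal (exp (- (p * (cmod z)^2))) \<partial>(lborel::complex measure))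
      = (\<integral>\<^sup>+x. ennreal pi * (indicator {0..} x * ennreal (exp (- (p * x)))) \<partial>lborel)"
    by (subst nn_integral_lborel_cmod_power2) (auto simp: mult.assoc)
  also have "\<dots> = ennreal (pi/p)"
    using assms by (simp add: nn_integral_cmult nn_integral_exp_neg_atLeast0 ennreal_mult[symmetric])
  finally show ?thesis .
qed

lemma nn_integral_lborel_translate:
  fixes g :: "'a::euclidean_space \<Rightarrow> ennreal"
  assumes [measurable]: "g \<in> borel_measurable borel"
  shows "(\<integral>\<^sup>+z. g z \<partial>lborel) = (\<integral>\<^sup>+z. g (c + z) \<partial>lborel)"
  by (subst lborel_distr_plus[symmetric, of c]) (simp add: nn_integral_distr)

lemma nn_integral_complex_gaussian_linear:
  assumes p: "p > 0"
  shows "(\<integral>\<^sup>+z. ennreal (exp (- p * (cmod z)^2 + 2 * Re (cnj z * w))) \<partial>(lborel::complex measure))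
       = ennreal (pi / p * exp ((cmod w)^2 / p))"
proof -
  let ?c = "w / complex_of_real p"
  have complete_square: "- p * (cmod z)^2 + 2 * Re (cnj z * w) = (cmod w)^2 / p + (- p * (cmod (z - ?c))^2)" for z
    unfolding cmod_power2 using p by (simp add: field_simps power2_eq_square)
  have "(\<integral>\<^sup>+z. ennreal (exp (- p * (cmod z)^2 + 2 * Re (cnj z * w))) \<partial>(lborel::complex measure))
    = (\<integral>\<^sup>+z. ennreal (exp ((cmod w)^2 / p)) * ennreal (exp (- p * (cmod (z - ?c))^2)) \<partial>lborel)"
    by (intro nn_integral_cong) (subst complete_square, simp add: ennreal_mult[symmetric] exp_add[symmetric])
  also have "\<dots> = (\<integral>\<^sup>+z. ennreal (exp ((cmod w)^2 / p)) * ennreal (exp (- p * (cmod (?c + z - ?c))^2)) \<partial>lborel)"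
    by (rule nn_integral_lborel_translate) auto
  also have "\<dots> = ennreal (exp ((cmod w)^2 / p)) * (\<integral>\<^sup>+z. ennreal (exp (- p * (cmod z)^2)) \<partial>lborel)"
    by (subst nn_integral_cmult) auto
  also have "\<dots> = ennreal (pi / p * exp ((cmod w)^2 / p))"
    using p by (simp add: nn_integral_complex_gaussian ennreal_mult[symmetric] mult_ac)
  finally show ?thesis .
qed

lemma cmod_diff_mult_power2:
  "(cmod (w - a*z))^2 = (cmod w)^2 - 2*Re(cnj z * (cnj a * w)) + (cmod a)^2 * (cmod z)^2"
  unfolding cmod_power2 by (simp add: power2_eq_square algebra_simps)

lemma cmod_add_power2: "(cmod (u + v))^2 = (cmod u)^2 + (cmod v)^2 + 2 * Re (u * cnj v)"
  unfolding cmod_power2 by (simp add: power2_eq_square algebra_simps)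

lemma cmod_diff_power2: "(cmod (u - v))^2 = (cmod u)^2 + (cmod v)^2 - 2 * Re (u * cnj v)"
  unfolding cmod_power2 by (simp add: power2_eq_square algebra_simps)

lemma cmod_add_unit_mult_power2:
  assumes "cmod e = 1"
  shows "(cmod (y2 + e*y1))^2 = (cmod y1)^2 + (cmod y2)^2 + 2 * Re (y1 * cnj y2 * e)"
  unfolding cmod_add_power2 using assms by (simp add: norm_mult algebra_simps)

lemma cmod_matched_filter_power2:
  assumes "cmod s0 = 1" "cmod e = 1"
  shows "(cmod (cnj (b * s0) * y1 + cnj (b * s0 * e) * y2))^2 = (cmod b)^2 * (cmod (y2 + e*y1))^2"
proof -
  have "cnj e * e = 1"
    using complex_norm_square[of e] assms by (simp add: mult.commute)
  then have "cnj (b * s0) * y1 + cnj (b * s0 * e) * y2 = cnj (b * s0) * cnj e * (y2 + e*y1)"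
    by (simp add: algebra_simps)
  then show ?thesis
    using assms by (simp add: norm_mult power_mult_distrib)
qed

lemma nn_integral_complex_gaussian_quadratic:
  assumes "\<alpha> > 0" "\<beta> \<ge> 0"
  shows "(\<integral>\<^sup>+z. ennreal (exp (- \<alpha> * (cmod z)^2 - \<beta> * (cmod (w - a*z))^2)) \<partial>(lborel::complex measure))
     = ennreal (pi / (\<alpha> + \<beta> * (cmod a)^2) * exp (- \<alpha> * \<beta> * (cmod w)^2 / (\<alpha> + \<beta> * (cmod a)^2)))"
proof -
  define p where "p = \<alpha> + \<beta> * (cmod a)^2"
  define W where "W = complex_of_real \<beta> * (cnj a * w)"
  have p: "p > 0"
    using assms unfolding p_def by (smt (verit) mult_nonneg_nonneg zero_le_power2)
  have expand: "- \<alpha> * (cmod z)^2 - \<beta> * (cmod (w - a*z))^2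
      = (- p * (cmod z)^2 + 2 * Re (cnj z * W)) + (- \<beta> * (cmod w)^2)" for z
    unfolding cmod_diff_mult_power2 p_def W_def by (simp add: algebra_simps)
  have "(\<integral>\<^sup>+z. ennreal (exp (- \<alpha> * (cmod z)^2 - \<beta> * (cmod (w - a*z))^2)) \<partial>(lborel::complex measure))
     = (\<integral>\<^sup>+z. ennreal (exp (- p * (cmod z)^2 + 2 * Re (cnj z * W))) * ennreal (exp (- \<beta> * (cmod w)^2)) \<partial>lborel)"
    by (intro nn_integral_cong) (subst expand, simp add: ennreal_mult[symmetric] exp_add[symmetric])
  also have "\<dots> = ennreal (pi / p * exp ((cmod W)^2 / p)) * ennreal (exp (- \<beta> * (cmod w)^2))"
    by (subst nn_integral_multc) (simp_all only: nn_integral_complex_gaussian_linear[OF p], measurable)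
  also have "\<dots> = ennreal (pi / p * exp ((cmod W)^2 / p - \<beta> * (cmod w)^2))"
    using p by (simp add: ennreal_mult[symmetric] exp_add[symmetric] mult.assoc)
  also have "(cmod W)^2 / p - \<beta> * (cmod w)^2 = - \<alpha> * \<beta> * (cmod w)^2 / p"
    using p unfolding W_def p_def by (simp add: norm_mult power_mult_distrib field_simps power2_eq_square)
  finally show ?thesis
    unfolding p_def .
qed

section \<open>Circularly symmetric complex Gaussian densities\<close>

definition cgauss_density :: "real \<Rightarrow> complex \<Rightarrow> real" where
  "cgauss_density V u = exp (- ((cmod u)^2) / V) / (pi * V)"

lemma cgauss_density_nonneg: "V \<ge> 0 \<Longrightarrow> cgauss_density V u \<ge> 0"
  by (simp add: cgauss_density_def)

lemma borel_measurable_cgauss_density[measurable (raw)]: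
  assumes [measurable]: "f \<in> borel_measurable M" "g \<in> borel_measurable M"
  shows "(\<lambda>x. cgauss_density (f x) (g x)) \<in> borel_measurable M"
  unfolding cgauss_density_def by measurable

lemma cn_std_eq_density: "cn_std = density lborel (\<lambda>z. ennreal (cgauss_density 1 z))"
  by (simp add: cn_std_def cgauss_density_def)

lemma sets_cn_std[measurable_cong, simp]: "sets cn_std = sets borel"
  by (simp add: cn_std_def)

lemma nn_integral_cn_std:
  assumes [measurable]: "f \<in> borel_measurable borel"
  shows "(\<integral>\<^sup>+z. f z \<partial>cn_std) = (\<integral>\<^sup>+z. ennreal (exp (- ((cmod z)^2)) / pi) * f z \<partial>lborel)"
  unfolding cn_std_def by (subst nn_integral_density) auto

lemma prob_space_cn_std: "prob_space cn_std"
proof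
  have "emeasure cn_std (space cn_std) = (\<integral>\<^sup>+z. ennreal (1/pi) * ennreal (exp (- (1 * (cmod z)^2))) \<partial>lborel)"
    unfolding cn_std_def by (auto simp: emeasure_density ennreal_mult[symmetric] intro!: nn_integral_cong)
  also have "\<dots> = 1"
    using nn_integral_complex_gaussian[of 1] by (subst nn_integral_cmult) (auto simp: ennreal_mult[symmetric])
  finally show "emeasure cn_std (space cn_std) = 1" .
qed

lemma nn_integral_cn_std_cgauss_density:
  assumes "V > 0"
  shows "(\<integral>\<^sup>+n. ennreal (cgauss_density V (w - a*n)) \<partial>cn_std) = ennreal (cgauss_density (V + (cmod a)^2) w)"
proof -
  have "(\<integral>\<^sup>+n. ennreal (cgauss_density V (w - a*n)) \<partial>cn_std)
      = (\<integral>\<^sup>+n. ennreal (1 / (pi * (pi * V))) * ennreal (exp (- 1 * (cmod n)^2 - (1/V) * (cmod (w - a*n))^2)) \<partial>lborel)"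
    using assms by (subst nn_integral_cn_std)
      (auto intro!: nn_integral_cong simp: cgauss_density_def ennreal_mult[symmetric] exp_add[symmetric])
  also have "\<dots> = ennreal (1 / (pi * (pi * V))) *
      ennreal (pi / (1 + (1/V) * (cmod a)^2) * exp (- 1 * (1/V) * (cmod w)^2 / (1 + (1/V) * (cmod a)^2)))"
    using assms by (subst nn_integral_cmult, measurable, subst nn_integral_complex_gaussian_quadratic) auto
  also have "\<dots> = ennreal (cgauss_density (V + (cmod a)^2) w)"
    using assms unfolding cgauss_density_def by (simp add: ennreal_mult[symmetric] field_simps)
  finally show ?thesis .
qed

lemma cgauss_density_common_fading:
  assumes V: "V > 0" and a: "cmod a2 = cmod a1"
  shows "exp (- ((cmod h)^2)) / pi * (cgauss_density V (y1 - a1*h) * cgauss_density V (y2 - a2*h))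
    = exp (- ((cmod y1)^2 + (cmod y2)^2) / V) / (pi^3 * V^2)
      * exp (- (1 + 2 * (cmod a1)^2 / V) * (cmod h)^2 + 2 * Re (cnj h * ((cnj a1 * y1 + cnj a2 * y2) / V)))"
proof -
  have Re_sum: "Re (cnj h * ((cnj a1 * y1 + cnj a2 * y2) / V))
      = (Re (cnj h * (cnj a1 * y1)) + Re (cnj h * (cnj a2 * y2))) / V"
    by (simp add: distrib_left Re_divide_of_real)
  have "- ((cmod h)^2) - (cmod (y1 - a1*h))^2 / V - (cmod (y2 - a2*h))^2 / V
      = - ((cmod y1)^2 + (cmod y2)^2) / V
        + (- (1 + 2 * (cmod a1)^2 / V) * (cmod h)^2 + 2 * Re (cnj h * ((cnj a1 * y1 + cnj a2 * y2) / V)))"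
    unfolding cmod_diff_mult_power2 a Re_sum using V by (simp add: field_simps)
  then show ?thesis
    unfolding cgauss_density_def exp_add[symmetric]
    by (simp add: exp_diff exp_minus exp_add field_simps power2_eq_square power3_eq_cube)
qed

lemma nn_integral_cn_std_cgauss_density_common_fading:
  assumes V: "V > 0" and a: "cmod a2 = cmod a1"
  shows "(\<integral>\<^sup>+h. ennreal (cgauss_density V (y1 - a1*h) * cgauss_density V (y2 - a2*h)) \<partial>cn_std)
     = ennreal (1 / (pi^2 * V * (V + 2*(cmod a1)^2)) *
         exp (- ((cmod y1)^2 + (cmod y2)^2) / V + (cmod (cnj a1 * y1 + cnj a2 * y2))^2 / (V * (V + 2*(cmod a1)^2))))"
proof -
  define p where "p = 1 + 2 * (cmod a1)^2 / V"
  define W where "W = (cnj a1 * y1 + cnj a2 * y2) / complex_of_real V"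
  define C where "C = exp (- ((cmod y1)^2 + (cmod y2)^2) / V) / (pi^3 * V^2)"
  have p: "p > 0" and pV: "p * V = V + 2*(cmod a1)^2"
    using V unfolding p_def by (simp_all add: add_pos_nonneg field_simps)
  have C: "C \<ge> 0"
    unfolding C_def by simp
  have integrand: "ennreal (exp (- ((cmod h)^2)) / pi) * ennreal (cgauss_density V (y1 - a1*h) * cgauss_density V (y2 - a2*h))
      = ennreal C * ennreal (exp (- p * (cmod h)^2 + 2 * Re (cnj h * W)))" for h
  proof -
    have "ennreal (exp (- ((cmod h)^2)) / pi) * ennreal (cgauss_density V (y1 - a1*h) * cgauss_density V (y2 - a2*h))
        = ennreal (exp (- ((cmod h)^2)) / pi * (cgauss_density V (y1 - a1*h) * cgauss_density V (y2 - a2*h)))"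
      using V by (intro ennreal_mult[symmetric]) (simp_all add: cgauss_density_nonneg)
    also have "\<dots> = ennreal C * ennreal (exp (- p * (cmod h)^2 + 2 * Re (cnj h * W)))"
      unfolding cgauss_density_common_fading[OF V a] C_def p_def W_def by (rule ennreal_mult) simp_all
    finally show ?thesis .
  qed
  have "(\<integral>\<^sup>+h. ennreal (cgauss_density V (y1 - a1*h) * cgauss_density V (y2 - a2*h)) \<partial>cn_std)
      = (\<integral>\<^sup>+h. ennreal C * ennreal (exp (- p * (cmod h)^2 + 2 * Re (cnj h * W))) \<partial>lborel)"
    by (subst nn_integral_cn_std) (auto simp: integrand)
  also have "\<dots> = ennreal (C * (pi / p * exp ((cmod W)^2 / p)))"
    using C p by (subst nn_integral_cmult) (simp_all only: nn_integral_complex_gaussian_linear[OF p], measurable, simp add: ennreal_mult[symmetric])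
  also have "C * (pi / p * exp ((cmod W)^2 / p))
     = 1 / (pi^2 * V * (V + 2*(cmod a1)^2)) *
         exp (- ((cmod y1)^2 + (cmod y2)^2) / V + (cmod (cnj a1 * y1 + cnj a2 * y2))^2 / (V * (V + 2*(cmod a1)^2)))"
  proof -
    have exponent: "(cmod W)^2 / p = (cmod (cnj a1 * y1 + cnj a2 * y2))^2 / (V * (V + 2*(cmod a1)^2))"
      unfolding W_def pV[symmetric] using V p by (simp add: norm_divide power_divide field_simps power2_eq_square)
    have factor: "1 / (pi^3 * V^2) * (pi / p) = 1 / (pi^2 * V * (V + 2*(cmod a1)^2))"
      using V p pV[symmetric] by (simp add: field_simps power2_eq_square power3_eq_cube)
    have "C * (pi / p * exp ((cmod W)^2 / p))
        = (1 / (pi^3 * V^2) * (pi / p)) * exp (- ((cmod y1)^2 + (cmod y2)^2) / V + (cmod W)^2 / p)"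
      unfolding C_def exp_add by (simp add: mult_ac)
    then show ?thesis
      unfolding exponent factor .
  qed
  finally show ?thesis .
qed

lemma borel_measurable_fst[measurable]: "(fst :: 'a::topological_space \<times> 'b::topological_space \<Rightarrow> 'a) \<in> borel_measurable borel"
  by (intro borel_measurable_continuous_onI continuous_intros)

lemma borel_measurable_snd[measurable]: "(snd :: 'a::topological_space \<times> 'b::topological_space \<Rightarrow> 'b) \<in> borel_measurable borel"
  by (intro borel_measurable_continuous_onI continuous_intros)

lemma prob_space_cn_std_pair: "prob_space (cn_std \<Otimes>\<^sub>M cn_std)"
  using prob_space_cn_std by (intro prob_space_pair) (auto simp: pair_prob_space_def pair_sigma_finite_def)

lemma sets_cn_std_pair[measurable_cong]:
  "sets (cn_std \<Otimes>\<^sub>M cn_std) = sets (borel :: (complex \<times> complex) measure)"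
  by (simp add: borel_prod[symmetric] cong: sets_pair_measure_cong)

lemma cn_std_pair_eq_density:
  "cn_std \<Otimes>\<^sub>M cn_std = density (lborel::(complex \<times> complex) measure)
     (\<lambda>(a,b). ennreal (cgauss_density 1 a) * ennreal (cgauss_density 1 b))"
proof -
  interpret prob_space cn_std
    by (rule prob_space_cn_std)
  have "cn_std \<Otimes>\<^sub>M cn_std = density (lborel \<Otimes>\<^sub>M lborel) (\<lambda>(a,b). ennreal (cgauss_density 1 a) * ennreal (cgauss_density 1 b))"
    unfolding cn_std_eq_density
    by (rule pair_measure_density) (auto intro: sigma_finite_lborel sigma_finite_measure simp: cn_std_eq_density[symmetric])
  then show ?thesis
    by (simp add: lborel_prod)
qed

lemma nn_integral_cn_std_pair_affine:
  fixes \<psi> :: "complex \<times> complex \<Rightarrow> ennreal" and \<mu> :: "complex \<times> complex"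
  assumes [measurable]: "\<psi> \<in> borel_measurable borel" and \<sigma>: "\<sigma> > 0"
  shows "(\<integral>\<^sup>+n. \<psi> (\<mu> + \<sigma> *\<^sub>R n) \<partial>(cn_std \<Otimes>\<^sub>M cn_std))
     = (\<integral>\<^sup>+y. ennreal (cgauss_density (\<sigma>^2) (fst y - fst \<mu>) * cgauss_density (\<sigma>^2) (snd y - snd \<mu>)) * \<psi> y \<partial>lborel)"
proof -
  let ?G = "\<lambda>y. ennreal (cgauss_density (\<sigma>^2) (fst y - fst \<mu>) * cgauss_density (\<sigma>^2) (snd y - snd \<mu>)) * \<psi> y"
  have "(\<integral>\<^sup>+y. ?G y \<partial>lborel)
      = (\<integral>\<^sup>+y. ?G y \<partial>density (distr lborel borel (\<lambda>x. \<mu> + \<sigma> *\<^sub>R x)) (\<lambda>_. \<bar>\<sigma>\<bar>^DIM(complex \<times> complex)))"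
    using lborel_affine[of \<sigma> \<mu>] \<sigma> by simp
  also have "\<dots> = (\<integral>\<^sup>+x. ennreal (\<sigma>^4) * ?G (\<mu> + \<sigma> *\<^sub>R x) \<partial>lborel)"
    using \<sigma> by (subst nn_integral_density, measurable, subst nn_integral_distr) auto
  also have "\<dots> = (\<integral>\<^sup>+x. (case x of (a,b) \<Rightarrow> ennreal (cgauss_density 1 a) * ennreal (cgauss_density 1 b))
                       * \<psi> (\<mu> + \<sigma> *\<^sub>R x) \<partial>lborel)"
  proof (intro nn_integral_cong)
    fix x :: "complex \<times> complex"
    obtain a b where x: "x = (a,b)"
      by (cases x)
    have "\<sigma>^4 * (cgauss_density (\<sigma>^2) (complex_of_real \<sigma> * a) * cgauss_density (\<sigma>^2) (complex_of_real \<sigma> * b))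
        = cgauss_density 1 a * cgauss_density 1 b"
      using \<sigma> unfolding cgauss_density_def
      by (simp add: norm_mult power_mult_distrib field_simps power2_eq_square power4_eq_xxxx)
    then show "ennreal (\<sigma>^4) * ?G (\<mu> + \<sigma> *\<^sub>R x)
        = (case x of (a,b) \<Rightarrow> ennreal (cgauss_density 1 a) * ennreal (cgauss_density 1 b)) * \<psi> (\<mu> + \<sigma> *\<^sub>R x)"
      using \<sigma> unfolding x
      by (simp add: scaleR_conv_of_real ennreal_mult[symmetric] cgauss_density_nonneg mult.assoc[symmetric])
  qed
  also have "\<dots> = (\<integral>\<^sup>+n. \<psi> (\<mu> + \<sigma> *\<^sub>R n) \<partial>(cn_std \<Otimes>\<^sub>M cn_std))"
    unfolding cn_std_pair_eq_density by (subst nn_integral_density) auto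
  finally show ?thesis ..
qed

lemma nn_integral_shifted_cn_std_pair:
  fixes \<mu> :: "'a \<Rightarrow> complex \<times> complex" and \<psi> :: "complex \<times> complex \<Rightarrow> ennreal"
  assumes "sigma_finite_measure P" and [measurable]: "\<mu> \<in> measurable P borel" "\<psi> \<in> borel_measurable borel"
    and \<sigma>: "\<sigma> > 0"
  shows "(\<integral>\<^sup>+\<omega>. \<integral>\<^sup>+n. \<psi> (\<mu> \<omega> + \<sigma> *\<^sub>R n) \<partial>(cn_std \<Otimes>\<^sub>M cn_std) \<partial>P)
       = (\<integral>\<^sup>+y. (\<integral>\<^sup>+\<omega>. ennreal (cgauss_density (\<sigma>^2) (fst y - fst (\<mu> \<omega>)) * cgauss_density (\<sigma>^2) (snd y - snd (\<mu> \<omega>))) \<partial>P)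
                 * \<psi> y \<partial>lborel)"
proof -
  interpret pair_sigma_finite lborel P
    using assms(1) by (simp add: pair_sigma_finite_def lborel.sigma_finite_measure_axioms)
  let ?Q = "\<lambda>y \<omega>. ennreal (cgauss_density (\<sigma>^2) (fst y - fst (\<mu> \<omega>)) * cgauss_density (\<sigma>^2) (snd y - snd (\<mu> \<omega>)))"
  have "(\<integral>\<^sup>+\<omega>. \<integral>\<^sup>+n. \<psi> (\<mu> \<omega> + \<sigma> *\<^sub>R n) \<partial>(cn_std \<Otimes>\<^sub>M cn_std) \<partial>P) = (\<integral>\<^sup>+\<omega>. \<integral>\<^sup>+y. ?Q y \<omega> * \<psi> y \<partial>lborel \<partial>P)"
    using \<sigma> by (intro nn_integral_cong nn_integral_cn_std_pair_affine) auto
  also have "\<dots> = (\<integral>\<^sup>+y. \<integral>\<^sup>+\<omega>. ?Q y \<omega> * \<psi> y \<partial>P \<partial>lborel)"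
    by (rule Fubini') measurable
  also have "\<dots> = (\<integral>\<^sup>+y. (\<integral>\<^sup>+\<omega>. ?Q y \<omega> \<partial>P) * \<psi> y \<partial>lborel)"
    by (intro nn_integral_cong nn_integral_multc) measurable
  finally show ?thesis .
qed

lemma nn_integral_cn_std_pair_cgauss_density:
  assumes V: "V > 0"
  shows "(\<integral>\<^sup>+n. ennreal (cgauss_density V (w1 - a * fst n) * cgauss_density V (w2 - a * snd n)) \<partial>(cn_std \<Otimes>\<^sub>M cn_std))
       = ennreal (cgauss_density (V + (cmod a)^2) w1 * cgauss_density (V + (cmod a)^2) w2)"
proof -
  interpret prob_space cn_std
    by (rule prob_space_cn_std)
  have "(\<integral>\<^sup>+n. ennreal (cgauss_density V (w1 - a * fst n) * cgauss_density V (w2 - a * snd n)) \<partial>(cn_std \<Otimes>\<^sub>M cn_std))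
      = (\<integral>\<^sup>+u. \<integral>\<^sup>+v. ennreal (cgauss_density V (w1 - a * u)) * ennreal (cgauss_density V (w2 - a * v)) \<partial>cn_std \<partial>cn_std)"
    using V by (subst nn_integral_fst[symmetric]) (auto simp: ennreal_mult cgauss_density_nonneg)
  also have "\<dots> = ennreal (cgauss_density (V + (cmod a)^2) w1) * ennreal (cgauss_density (V + (cmod a)^2) w2)"
    by (simp add: nn_integral_cmult nn_integral_multc nn_integral_cn_std_cgauss_density[OF V])
  also have "\<dots> = ennreal (cgauss_density (V + (cmod a)^2) w1 * cgauss_density (V + (cmod a)^2) w2)"
    using V by (simp add: ennreal_mult cgauss_density_nonneg add_pos_nonneg)
  finally show ?thesis .
qed

lemma prob_space_link_noise: "prob_space link_noise"
  unfolding link_noise_def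
  by (intro prob_space_pair prob_space_cn_std prob_space_cn_std_pair; simp add: pair_prob_space_def pair_sigma_finite_def prob_space_cn_std prob_space_cn_std_pair prob_space_imp_sigma_finite)+

section \<open>Averaging over the noise of one link\<close>

lemma sets_link_noise[measurable_cong]:
  "sets link_noise = sets (borel \<Otimes>\<^sub>M (borel \<Otimes>\<^sub>M ((borel :: (complex \<times> complex) measure) \<Otimes>\<^sub>M (borel :: (complex \<times> complex) measure))))"
  unfolding link_noise_def by (intro sets_pair_measure_cong sets_cn_std_pair) auto

lemma nn_integral_link_noise:
  assumes [measurable]: "\<Phi> \<in> borel_measurable link_noise"
  shows "(\<integral>\<^sup>+\<omega>. \<Phi> \<omega> \<partial>link_noise) =
    (\<integral>\<^sup>+h1. \<integral>\<^sup>+h2. \<integral>\<^sup>+n1. \<integral>\<^sup>+n2. \<Phi> (h1, h2, n1, n2) \<partial>(cn_std \<Otimes>\<^sub>M cn_std) \<partial>(cn_std \<Otimes>\<^sub>M cn_std) \<partial>cn_std \<partial>cn_std)"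
proof -
  interpret C: prob_space cn_std
    by (rule prob_space_cn_std)
  interpret C2: prob_space "cn_std \<Otimes>\<^sub>M cn_std"
    by (rule prob_space_cn_std_pair)
  interpret C22: prob_space "(cn_std \<Otimes>\<^sub>M cn_std) \<Otimes>\<^sub>M (cn_std \<Otimes>\<^sub>M cn_std)"
    by (intro prob_space_pair) (auto simp: pair_prob_space_def pair_sigma_finite_def C2.prob_space_axioms prob_space_cn_std)
  interpret C3: prob_space "cn_std \<Otimes>\<^sub>M ((cn_std \<Otimes>\<^sub>M cn_std) \<Otimes>\<^sub>M (cn_std \<Otimes>\<^sub>M cn_std))"
    by (intro prob_space_pair) (auto simp: pair_prob_space_def pair_sigma_finite_def C22.prob_space_axioms C.prob_space_axioms)
  have "(\<integral>\<^sup>+\<omega>. \<Phi> \<omega> \<partial>link_noise)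
      = (\<integral>\<^sup>+h1. \<integral>\<^sup>+r. \<Phi> (h1, r) \<partial>(cn_std \<Otimes>\<^sub>M ((cn_std \<Otimes>\<^sub>M cn_std) \<Otimes>\<^sub>M (cn_std \<Otimes>\<^sub>M cn_std))) \<partial>cn_std)"
    unfolding link_noise_def by (rule C3.nn_integral_fst[symmetric]) (simp add: link_noise_def[symmetric])
  also have "\<dots> = (\<integral>\<^sup>+h1. \<integral>\<^sup>+h2. \<integral>\<^sup>+r. \<Phi> (h1, h2, r) \<partial>((cn_std \<Otimes>\<^sub>M cn_std) \<Otimes>\<^sub>M (cn_std \<Otimes>\<^sub>M cn_std)) \<partial>cn_std \<partial>cn_std)"
    by (intro nn_integral_cong C22.nn_integral_fst[symmetric]) measurable
  also have "\<dots> = (\<integral>\<^sup>+h1. \<integral>\<^sup>+h2. \<integral>\<^sup>+n1. \<integral>\<^sup>+n2. \<Phi> (h1, h2, n1, n2) \<partial>(cn_std \<Otimes>\<^sub>M cn_std) \<partial>(cn_std \<Otimes>\<^sub>M cn_std) \<partial>cn_std \<partial>cn_std)"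
    by (intro nn_integral_cong C2.nn_integral_fst[symmetric]) measurable
  finally show ?thesis .
qed

lemma distr_eq_densityI:
  fixes F :: "'a \<Rightarrow> 'b::euclidean_space"
  assumes [measurable]: "F \<in> measurable P borel" "g \<in> borel_measurable borel"
    and eq: "\<And>\<psi>. \<psi> \<in> borel_measurable borel \<Longrightarrow> (\<integral>\<^sup>+\<omega>. \<psi> (F \<omega>) \<partial>P) = (\<integral>\<^sup>+y. g y * \<psi> y \<partial>lborel)"
  shows "distr P lborel F = density lborel g"
proof (rule measure_eqI)
  fix A assume "A \<in> sets (distr P lborel F)"
  then have [measurable]: "A \<in> sets borel"
    by simp
  have "emeasure (distr P lborel F) A = (\<integral>\<^sup>+\<omega>. indicator (F -` A \<inter> space P) \<omega> \<partial>P)"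
    by (subst emeasure_distr) (auto intro!: nn_integral_indicator[symmetric])
  also have "\<dots> = (\<integral>\<^sup>+\<omega>. indicator A (F \<omega>) \<partial>P)"
    by (intro nn_integral_cong) (auto split: split_indicator)
  also have "\<dots> = emeasure (density lborel g) A"
    by (subst eq) (auto simp: emeasure_density)
  finally show "emeasure (distr P lborel F) A = emeasure (density lborel g) A" .
qed simp

section \<open>The direct link\<close>

definition direct_link :: "real \<Rightarrow> real \<Rightarrow> complex \<times> complex
    \<Rightarrow> complex \<times> complex \<times> (complex \<times> complex) \<times> (complex \<times> complex) \<Rightarrow> complex \<times> complex" where
  "direct_link g s x = (\<lambda>(h, _, n, _). csc (complex_of_real s) (csc (complex_of_real (sqrt g) * h) x + n))"

definition direct_density :: "real \<Rightarrow> real \<Rightarrow> complex \<Rightarrow> complex \<times> complex \<Rightarrow> real" where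
  "direct_density g s e y = 1 / (pi^2 * s^4 * (1 + 2*g)) *
     exp (- ((cmod (fst y))^2 + (cmod (snd y))^2) / s^2
          + g * ((cmod (fst y))^2 + (cmod (snd y))^2 + 2 * Re (fst y * cnj (snd y) * e)) / (s^2 * (1 + 2*g)))"

lemma borel_measurable_direct_density[measurable]: "direct_density g s e \<in> borel_measurable borel"
  unfolding direct_density_def by measurable

lemma direct_density_pos: "g > 0 \<Longrightarrow> s > 0 \<Longrightarrow> direct_density g s e y > 0"
  unfolding direct_density_def by (simp add: add_pos_pos)

lemma direct_density_factor:
  "direct_density g s e y = direct_density g s 0 y * exp (2 * g / (1 + 2 * g) * Re (fst y * cnj (snd y) * e) / s^2)"
proof -
  define a where "a = (cmod (fst y))^2 + (cmod (snd y))^2"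
  define R where "R = Re (fst y * cnj (snd y) * e)"
  have "- a / s^2 + g * (a + 2 * R) / (s^2 * (1 + 2*g))
      = (- a / s^2 + g * a / (s^2 * (1 + 2*g))) + 2 * g / (1 + 2 * g) * R / s^2"
    by (simp add: distrib_left add_divide_distrib mult_ac)
  then show ?thesis
    unfolding direct_density_def a_def[symmetric] R_def[symmetric] by (simp add: exp_add exp_diff mult_ac)
qed

lemma measurable_direct_link[measurable]: "direct_link g s x \<in> measurable link_noise borel"
proof -
  have "direct_link g s x = (\<lambda>\<omega>. (complex_of_real s * (complex_of_real (sqrt g) * fst \<omega> * fst x + fst (fst (snd (snd \<omega>)))),
               complex_of_real s * (complex_of_real (sqrt g) * fst \<omega> * snd x + snd (fst (snd (snd \<omega>))))))"
    by (auto simp: fun_eq_iff csc_def direct_link_def)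
  also have "\<dots> \<in> measurable link_noise borel"
    by measurable
  finally show ?thesis .
qed

lemma nn_integral_cn_std_direct_fading:
  assumes g: "g > 0" and s: "s > 0" and s0: "cmod s0 = 1" and e: "cmod e = 1"
  defines "a \<equiv> complex_of_real (s * sqrt g) * s0"
  shows "(\<integral>\<^sup>+h. ennreal (cgauss_density (s^2) (fst y - a * h) * cgauss_density (s^2) (snd y - a * e * h)) \<partial>cn_std)
       = ennreal (direct_density g s e y)"
proof -
  have ca: "cmod (a * e) = cmod a" and ca2: "(cmod a)^2 = s^2 * g"
    using e s0 g s by (simp_all add: a_def norm_mult power_mult_distrib)
  have matched: "(cmod (cnj a * fst y + cnj (a * e) * snd y))^2
      = s^2 * g * ((cmod (fst y))^2 + (cmod (snd y))^2 + 2 * Re (fst y * cnj (snd y) * e))"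
  proof -
    have "(cmod (complex_of_real (s * sqrt g)))^2 = s^2 * g"
      using s g by (simp del: of_real_mult add: norm_mult power_mult_distrib)
    then show ?thesis
      unfolding a_def cmod_matched_filter_power2[OF s0 e] cmod_add_unit_mult_power2[OF e] by simp
  qed
  have scale: "s^2 * g * X / (s^2 * (s^2 + 2 * (s^2 * g))) = g * X / (s^2 * (1 + 2*g))" for X
  proof -
    have "s^2 * g * X / (s^2 * (s^2 + 2 * (s^2 * g))) = (s^2 * (g * X)) / (s^2 * (s^2 * (1 + 2*g)))"
      by (simp add: algebra_simps)
    also have "\<dots> = g * X / (s^2 * (1 + 2*g))"
      using s by (intro mult_divide_mult_cancel_left) simp
    finally show ?thesis .
  qed
  have const: "1 / (pi^2 * s^2 * (s^2 + 2 * (s^2 * g))) = 1 / (pi^2 * s^4 * (1 + 2*g))"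
    by (simp add: algebra_simps power2_eq_square power4_eq_xxxx)
  have "s^2 > 0"
    using s by simp
  then show ?thesis
    unfolding nn_integral_cn_std_cgauss_density_common_fading[OF \<open>s^2 > 0\<close> ca] matched ca2 const scale direct_density_def
    by simp
qed

lemma distr_direct_link:
  assumes g: "g > 0" and s: "s > 0" and s0: "cmod s0 = 1" and e: "cmod e = 1"
  shows "distr link_noise lborel (direct_link g s (s0, s0 * e)) = density lborel (\<lambda>y. ennreal (direct_density g s e y))"
proof (rule distr_eq_densityI)
  interpret C: prob_space cn_std
    by (rule prob_space_cn_std)
  interpret C2: prob_space "cn_std \<Otimes>\<^sub>M cn_std"
    by (rule prob_space_cn_std_pair)
  define a where "a = complex_of_real (s * sqrt g) * s0"
  define \<mu> where "\<mu> h = (a * h, a * e * h)" for h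
  have link: "direct_link g s (s0, s0 * e) (h1, h2, n1, n2) = \<mu> h1 + s *\<^sub>R n1" for h1 h2 n1 n2
    by (cases n1) (simp add: direct_link_def csc_def \<mu>_def a_def scaleR_conv_of_real algebra_simps)
  fix \<psi> :: "complex \<times> complex \<Rightarrow> ennreal"
  assume [measurable]: "\<psi> \<in> borel_measurable borel"
  have "(\<integral>\<^sup>+\<omega>. \<psi> (direct_link g s (s0, s0 * e) \<omega>) \<partial>link_noise)
      = (\<integral>\<^sup>+h1. \<integral>\<^sup>+h2. \<integral>\<^sup>+n1. \<integral>\<^sup>+n2. \<psi> (\<mu> h1 + s *\<^sub>R n1) \<partial>(cn_std \<Otimes>\<^sub>M cn_std) \<partial>(cn_std \<Otimes>\<^sub>M cn_std) \<partial>cn_std \<partial>cn_std)"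
    by (subst nn_integral_link_noise) (simp_all add: link)
  also have "\<dots> = (\<integral>\<^sup>+h1. \<integral>\<^sup>+n1. \<psi> (\<mu> h1 + s *\<^sub>R n1) \<partial>(cn_std \<Otimes>\<^sub>M cn_std) \<partial>cn_std)"
    using C.emeasure_space_1 C2.emeasure_space_1 by simp
  also have "\<dots> = (\<integral>\<^sup>+y. (\<integral>\<^sup>+h. ennreal (cgauss_density (s^2) (fst y - fst (\<mu> h)) * cgauss_density (s^2) (snd y - snd (\<mu> h))) \<partial>cn_std)
                 * \<psi> y \<partial>lborel)"
    using s by (intro nn_integral_shifted_cn_std_pair C.sigma_finite_measure_axioms) (auto simp: \<mu>_def)
  also have "\<dots> = (\<integral>\<^sup>+y. ennreal (direct_density g s e y) * \<psi> y \<partial>lborel)"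
    unfolding \<mu>_def a_def fst_conv snd_conv nn_integral_cn_std_direct_fading[OF g s s0 e] ..
  finally show "(\<integral>\<^sup>+\<omega>. \<psi> (direct_link g s (s0, s0 * e) \<omega>) \<partial>link_noise) = (\<integral>\<^sup>+y. ennreal (direct_density g s e y) * \<psi> y \<partial>lborel)" .
qed simp_all

section \<open>The integral \<open>I\<close>\<close>

definition Ifun_integrand :: "real \<Rightarrow> real \<Rightarrow> real \<Rightarrow> real \<Rightarrow> real \<Rightarrow> real \<Rightarrow> real" where
  "Ifun_integrand e1 e2 b1 b2 lam x =
     exp (- (x + b1 / (1 + e1 * x) + b2 / (1 + e2 * x))) / ((1 + e1 * x) powr lam * (1 + e2 * x))"

lemma borel_measurable_Ifun_integrand[measurable]: "Ifun_integrand e1 e2 b1 b2 lam \<in> borel_measurable borel"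
  unfolding Ifun_integrand_def by measurable

lemma Ifun_integrand_bounds:
  assumes "e1 \<ge> 0" "e2 \<ge> 0" "b1 \<ge> 0" "b2 \<ge> 0" "lam \<ge> 0" "x \<ge> 0"
  shows "Ifun_integrand e1 e2 b1 b2 lam x > 0" "Ifun_integrand e1 e2 b1 b2 lam x \<le> exp (- x)"
proof -
  have ge1: "1 + e1 * x \<ge> 1" "1 + e2 * x \<ge> 1"
    using assms by auto
  then show "Ifun_integrand e1 e2 b1 b2 lam x > 0"
    unfolding Ifun_integrand_def by simp
  have "b1 / (1 + e1 * x) \<ge> 0" "b2 / (1 + e2 * x) \<ge> 0"
    using assms ge1 by auto
  then have "exp (- (x + b1 / (1 + e1 * x) + b2 / (1 + e2 * x))) \<le> exp (- x)"
    by simp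
  moreover have "(1 + e1 * x) powr lam \<ge> 1"
    using ge1 assms by (simp add: ge_one_powr_ge_zero)
  then have "(1 + e1 * x) powr lam * (1 + e2 * x) \<ge> 1"
    using ge1 mult_mono[of 1 "(1 + e1 * x) powr lam" 1 "1 + e2 * x"] by simp
  ultimately show "Ifun_integrand e1 e2 b1 b2 lam x \<le> exp (- x)"
    unfolding Ifun_integrand_def by (smt (verit, best) divide_le_eq exp_gt_zero mult_le_cancel_left1)
qed

lemma nn_integral_Ifun_integrand:
  assumes "e1 \<ge> 0" "e2 \<ge> 0" "b1 \<ge> 0" "b2 \<ge> 0" "lam \<ge> 0"
  shows "(\<integral>\<^sup>+x. ennreal (indicator {0..} x * Ifun_integrand e1 e2 b1 b2 lam x) \<partial>lborel) = ennreal (Ifun e1 e2 b1 b2 lam)"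
proof -
  let ?f = "\<lambda>x. indicator {0..} x * Ifun_integrand e1 e2 b1 b2 lam x"
  have nonneg: "?f x \<ge> 0" for x
    using Ifun_integrand_bounds[OF assms, of x] by (auto simp: indicator_def)
  have "(\<integral>\<^sup>+x. ennreal (?f x) \<partial>lborel) \<le> (\<integral>\<^sup>+x. indicator {0..} x * ennreal (exp (- (1 * x))) \<partial>lborel)"
    using Ifun_integrand_bounds[OF assms] by (intro nn_integral_mono) (auto simp: indicator_def)
  also have "\<dots> < \<infinity>"
    by (subst nn_integral_exp_neg_atLeast0) simp_all
  finally have "integrable lborel ?f"
    using nonneg by (intro integrableI_nonneg) auto
  then have "(\<integral>\<^sup>+x. ennreal (?f x) \<partial>lborel) = ennreal (integral\<^sup>L lborel ?f)"
    using nonneg by (intro nn_integral_eq_integral) auto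
  then show ?thesis
    unfolding Ifun_def Ifun_integrand_def set_lebesgue_integral_def by simp
qed

lemma Ifun_pos:
  assumes "e1 \<ge> 0" "e2 \<ge> 0" "b1 \<ge> 0" "b2 \<ge> 0" "lam \<ge> 0"
  shows "Ifun e1 e2 b1 b2 lam > 0"
proof -
  define c where "c = exp (- (1 + b1 + b2)) / ((1 + e1) powr lam * (1 + e2))"
  have lower: "c \<le> Ifun_integrand e1 e2 b1 b2 lam x" if x: "0 \<le> x" "x \<le> 1" for x
  proof -
    have ge1: "1 + e1 * x \<ge> 1" "1 + e2 * x \<ge> 1" and le: "1 + e1 * x \<le> 1 + e1" "1 + e2 * x \<le> 1 + e2"
      using x assms by (auto simp: mult_left_le)
    have "b1 / (1 + e1 * x) \<le> b1" "b2 / (1 + e2 * x) \<le> b2"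
      using ge1 assms by (auto simp: divide_le_eq algebra_simps intro!: mult_nonneg_nonneg)
    then have "exp (- (1 + b1 + b2)) \<le> exp (- (x + b1 / (1 + e1 * x) + b2 / (1 + e2 * x)))"
      using x by simp
    moreover have "(1 + e1 * x) powr lam * (1 + e2 * x) \<le> (1 + e1) powr lam * (1 + e2)"
      using ge1 le assms by (intro mult_mono powr_mono2) auto
    ultimately show ?thesis
      unfolding c_def Ifun_integrand_def using ge1 by (intro frac_le) auto
  qed
  have "0 < ennreal c"
    unfolding c_def using assms by (simp add: add_pos_nonneg)
  also have "ennreal c = (\<integral>\<^sup>+x. ennreal c * indicator {0..1::real} x \<partial>lborel)"
    by (subst nn_integral_cmult_indicator) auto
  also have "\<dots> \<le> (\<integral>\<^sup>+x. ennreal (indicator {0..} x * Ifun_integrand e1 e2 b1 b2 lam x) \<partial>lborel)"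
    using lower by (intro nn_integral_mono) (auto simp: indicator_def ennreal_leI)
  also have "\<dots> = ennreal (Ifun e1 e2 b1 b2 lam)"
    by (rule nn_integral_Ifun_integrand[OF assms])
  finally show ?thesis
    by simp
qed

section \<open>The relay links\<close>

definition relay_link :: "real \<Rightarrow> real \<Rightarrow> real \<Rightarrow> complex \<times> complex
    \<Rightarrow> complex \<times> complex \<times> (complex \<times> complex) \<times> (complex \<times> complex) \<Rightarrow> complex \<times> complex" where
  "relay_link c1 c2 \<sigma> x = (\<lambda>(h1, h2, n1, n2).
     csc (complex_of_real c1 * h1 * h2) x + csc (complex_of_real c2 * h2) n1 + csc (complex_of_real \<sigma>) n2)"

definition relay_density :: "real \<Rightarrow> real \<Rightarrow> real \<Rightarrow> complex \<Rightarrow> complex \<times> complex \<Rightarrow> real" where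
  "relay_density c1 c2 \<sigma> e y = Ifun (c2^2 / \<sigma>^2) ((c2^2 + 2 * c1^2) / \<sigma>^2)
       ((cmod (snd y - fst y * e))^2 / (2 * \<sigma>^2)) ((cmod (snd y + fst y * e))^2 / (2 * \<sigma>^2)) 1 / (pi^2 * \<sigma>^4)"

text \<open>The density of a relay observation conditional on \<open>|h_rd|^2 = x\<close>, after averaging over
  \<open>n_rd\<close>, \<open>n_0r\<close> and \<open>h_0r\<close>.\<close>
definition relay_density_given_fading :: "real \<Rightarrow> real \<Rightarrow> real \<Rightarrow> complex \<Rightarrow> complex \<times> complex \<Rightarrow> real \<Rightarrow> real" where
  "relay_density_given_fading c1 c2 \<sigma> e y x =
     1 / (pi^2 * (\<sigma>^2 + c2^2 * x) * ((\<sigma>^2 + c2^2 * x) + 2 * (c1^2 * x))) *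
     exp (- ((cmod (fst y))^2 + (cmod (snd y))^2) / (\<sigma>^2 + c2^2 * x)
          + c1^2 * x * (cmod (snd y + e * fst y))^2 / ((\<sigma>^2 + c2^2 * x) * ((\<sigma>^2 + c2^2 * x) + 2 * (c1^2 * x))))"

lemma borel_measurable_relay_density[measurable]: "relay_density c1 c2 \<sigma> e \<in> borel_measurable borel"
  unfolding relay_density_def Ifun_def set_lebesgue_integral_def by measurable

lemma borel_measurable_relay_density_given_fading[measurable]:
  "relay_density_given_fading c1 c2 \<sigma> e y \<in> borel_measurable borel"
  unfolding relay_density_given_fading_def by measurable

lemma relay_density_pos: "\<sigma> > 0 \<Longrightarrow> relay_density c1 c2 \<sigma> e y > 0"
  unfolding relay_density_def by (simp add: Ifun_pos)

lemma measurable_relay_link[measurable]: "relay_link c1 c2 \<sigma> x \<in> measurable link_noise borel"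
proof -
  have "relay_link c1 c2 \<sigma> x = (\<lambda>\<omega>.
      (complex_of_real c1 * fst \<omega> * fst (snd \<omega>) * fst x + complex_of_real c2 * fst (snd \<omega>) * fst (fst (snd (snd \<omega>)))
         + complex_of_real \<sigma> * fst (snd (snd (snd \<omega>))),
       complex_of_real c1 * fst \<omega> * fst (snd \<omega>) * snd x + complex_of_real c2 * fst (snd \<omega>) * snd (fst (snd (snd \<omega>)))
         + complex_of_real \<sigma> * snd (snd (snd (snd \<omega>)))))"
    by (auto simp: fun_eq_iff csc_def relay_link_def)
  also have "\<dots> \<in> measurable link_noise borel"
    by measurable
  finally show ?thesis .
qed

lemma relay_density_given_fading_eq_Ifun_integrand:
  assumes \<sigma>: "\<sigma> > 0" and e: "cmod e = 1" and x: "x \<ge> 0"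
  shows "exp (- x) * relay_density_given_fading c1 c2 \<sigma> e y x
       = Ifun_integrand (c2^2 / \<sigma>^2) ((c2^2 + 2 * c1^2) / \<sigma>^2)
           ((cmod (snd y - fst y * e))^2 / (2 * \<sigma>^2)) ((cmod (snd y + fst y * e))^2 / (2 * \<sigma>^2)) 1 x / (pi^2 * \<sigma>^4)"
proof -
  define u1 where "u1 = 1 + c2^2 / \<sigma>^2 * x"
  define u2 where "u2 = 1 + (c2^2 + 2 * c1^2) / \<sigma>^2 * x"
  define A where "A = (cmod (snd y - fst y * e))^2"
  define B where "B = (cmod (snd y + fst y * e))^2"
  have u: "u1 \<ge> 1" "u2 \<ge> 1"
    using \<sigma> x unfolding u1_def u2_def by auto
  have V: "\<sigma>^2 + c2^2 * x = \<sigma>^2 * u1" and W: "\<sigma>^2 * u1 + 2 * (c1^2 * x) = \<sigma>^2 * u2"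
    unfolding u1_def u2_def using \<sigma> by (simp_all add: field_simps)
  have parallelogram: "(cmod (fst y))^2 + (cmod (snd y))^2 = (A + B) / 2"
    unfolding A_def B_def cmod_add_power2 cmod_diff_power2 using e by (simp add: norm_mult)
  have B: "(cmod (snd y + e * fst y))^2 = B"
    unfolding B_def by (simp add: mult.commute)
  have exponent: "- ((A + B) / 2) / (\<sigma>^2 * u1) + c1^2 * x * B / (\<sigma>^2 * u1 * (\<sigma>^2 * u2))
      = - (A / (2 * \<sigma>^2)) / u1 - (B / (2 * \<sigma>^2)) / u2"
  proof -
    have k: "c1^2 * x = \<sigma>^2 * (u2 - u1) / 2"
      unfolding u1_def u2_def using \<sigma> by (simp add: field_simps)
    show ?thesis
      unfolding k using \<sigma> u by (simp add: field_simps power2_eq_square)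
  qed
  have "exp (- x) * relay_density_given_fading c1 c2 \<sigma> e y x
      = exp (- x) * exp (- (A / (2 * \<sigma>^2)) / u1 - (B / (2 * \<sigma>^2)) / u2) / (pi^2 * (\<sigma>^2 * u1) * (\<sigma>^2 * u2))"
    unfolding relay_density_given_fading_def V W parallelogram B exponent[symmetric]
    by (simp add: minus_divide_left)
  also have "\<dots> = exp (- (x + (A / (2 * \<sigma>^2)) / u1 + (B / (2 * \<sigma>^2)) / u2)) / (pi^2 * \<sigma>^4 * (u1 * u2))"
    unfolding exp_add[symmetric] by (simp add: power4_eq_xxxx power2_eq_square mult_ac)
  finally show ?thesis
    unfolding Ifun_integrand_def u1_def[symmetric] u2_def[symmetric] A_def[symmetric] B_def[symmetric]
    using u by (simp add: mult_ac)
qed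

lemma relay_density_given_fading_nonneg:
  assumes "\<sigma> > 0" "x \<ge> 0"
  shows "relay_density_given_fading c1 c2 \<sigma> e y x \<ge> 0"
proof -
  have "\<sigma>^2 + c2^2 * x > 0" "\<sigma>^2 + c2^2 * x + 2 * (c1^2 * x) > 0"
    using assms by (simp_all add: add_pos_nonneg)
  then show ?thesis
    unfolding relay_density_given_fading_def by simp
qed

lemma nn_integral_cn_std_relay_density_given_fading:
  assumes \<sigma>: "\<sigma> > 0" and e: "cmod e = 1"
  shows "(\<integral>\<^sup>+h. ennreal (relay_density_given_fading c1 c2 \<sigma> e y ((cmod h)^2)) \<partial>cn_std) = ennreal (relay_density c1 c2 \<sigma> e y)"
proof -
  define e1 where "e1 = c2^2 / \<sigma>^2"
  define e2 where "e2 = (c2^2 + 2 * c1^2) / \<sigma>^2"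
  define b1 where "b1 = (cmod (snd y - fst y * e))^2 / (2 * \<sigma>^2)"
  define b2 where "b2 = (cmod (snd y + fst y * e))^2 / (2 * \<sigma>^2)"
  have nonneg: "e1 \<ge> 0" "e2 \<ge> 0" "b1 \<ge> 0" "b2 \<ge> 0" "(1::real) \<ge> 0"
    unfolding e1_def e2_def b1_def b2_def by auto
  have integrand: "exp (- x) * relay_density_given_fading c1 c2 \<sigma> e y x = Ifun_integrand e1 e2 b1 b2 1 x / (pi^2 * \<sigma>^4)"
    if "x \<ge> 0" for x
    unfolding e1_def e2_def b1_def b2_def by (rule relay_density_given_fading_eq_Ifun_integrand[OF \<sigma> e that])
  have "(\<integral>\<^sup>+h. ennreal (relay_density_given_fading c1 c2 \<sigma> e y ((cmod h)^2)) \<partial>cn_std)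
      = (\<integral>\<^sup>+h. (\<lambda>x. ennreal (exp (- x) / pi) * ennreal (relay_density_given_fading c1 c2 \<sigma> e y x)) ((cmod h)^2) \<partial>lborel)"
    by (subst nn_integral_cn_std) auto
  also have "\<dots> = (\<integral>\<^sup>+x. ennreal pi * indicator {0..} x * (ennreal (exp (- x) / pi) * ennreal (relay_density_given_fading c1 c2 \<sigma> e y x)) \<partial>lborel)"
    by (rule nn_integral_lborel_cmod_power2) measurable
  also have "\<dots> = (\<integral>\<^sup>+x. ennreal (1 / (pi^2 * \<sigma>^4)) * ennreal (indicator {0..} x * Ifun_integrand e1 e2 b1 b2 1 x) \<partial>lborel)"
  proof (intro nn_integral_cong)
    fix x :: real
    show "ennreal pi * indicator {0..} x * (ennreal (exp (- x) / pi) * ennreal (relay_density_given_fading c1 c2 \<sigma> e y x))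
        = ennreal (1 / (pi^2 * \<sigma>^4)) * ennreal (indicator {0..} x * Ifun_integrand e1 e2 b1 b2 1 x)"
    proof (cases "x \<ge> 0")
      case True
      have "pi * (exp (- x) / pi * relay_density_given_fading c1 c2 \<sigma> e y x) = 1 / (pi^2 * \<sigma>^4) * Ifun_integrand e1 e2 b1 b2 1 x"
        using integrand[OF True] by simp
      then show ?thesis
        using True \<sigma> Ifun_integrand_bounds(1)[OF nonneg True] relay_density_given_fading_nonneg[OF \<sigma> True]
        by (simp add: ennreal_mult[symmetric] mult.assoc[symmetric] del: ennreal_mult)
    qed simp
  qed
  also have "\<dots> = ennreal (1 / (pi^2 * \<sigma>^4)) * ennreal (Ifun e1 e2 b1 b2 1)"
    by (subst nn_integral_cmult) (auto simp: nn_integral_Ifun_integrand[OF nonneg])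
  also have "\<dots> = ennreal (relay_density c1 c2 \<sigma> e y)"
    unfolding relay_density_def e1_def[symmetric] e2_def[symmetric] b1_def[symmetric] b2_def[symmetric]
    using Ifun_pos[OF nonneg] by (simp add: ennreal_mult[symmetric])
  finally show ?thesis .
qed

lemma nn_integral_relay_given_rd_fading:
  fixes c1 c2 \<sigma> :: real and s0 e h2 :: complex
  assumes \<sigma>: "\<sigma> > 0" and s0: "cmod s0 = 1" and e: "cmod e = 1"
  defines "\<mu> h1 n1 \<equiv> (complex_of_real c1 * h2 * s0 * h1 + complex_of_real c2 * h2 * fst n1,
                      complex_of_real c1 * h2 * s0 * e * h1 + complex_of_real c2 * h2 * snd n1)"
  shows "(\<integral>\<^sup>+h1. \<integral>\<^sup>+n1. ennreal (cgauss_density (\<sigma>^2) (fst y - fst (\<mu> h1 n1)) * cgauss_density (\<sigma>^2) (snd y - snd (\<mu> h1 n1)))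
            \<partial>(cn_std \<Otimes>\<^sub>M cn_std) \<partial>cn_std)
       = ennreal (relay_density_given_fading c1 c2 \<sigma> e y ((cmod h2)^2))"
proof -
  define V where "V = \<sigma>^2 + (cmod (complex_of_real c2 * h2))^2"
  define a where "a = complex_of_real c1 * h2 * s0"
  have V: "V > 0"
    unfolding V_def using \<sigma> by (simp add: add_pos_nonneg)
  have "(\<integral>\<^sup>+h1. \<integral>\<^sup>+n1. ennreal (cgauss_density (\<sigma>^2) (fst y - fst (\<mu> h1 n1)) * cgauss_density (\<sigma>^2) (snd y - snd (\<mu> h1 n1)))
            \<partial>(cn_std \<Otimes>\<^sub>M cn_std) \<partial>cn_std)
      = (\<integral>\<^sup>+h1. ennreal (cgauss_density V (fst y - a * h1) * cgauss_density V (snd y - a * e * h1)) \<partial>cn_std)"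
  proof (intro nn_integral_cong)
    fix h1
    have split: "fst y - fst (\<mu> h1 n1) = (fst y - a * h1) - complex_of_real c2 * h2 * fst n1"
      "snd y - snd (\<mu> h1 n1) = (snd y - a * e * h1) - complex_of_real c2 * h2 * snd n1" for n1
      unfolding \<mu>_def a_def by (simp_all add: algebra_simps)
    show "(\<integral>\<^sup>+n1. ennreal (cgauss_density (\<sigma>^2) (fst y - fst (\<mu> h1 n1)) * cgauss_density (\<sigma>^2) (snd y - snd (\<mu> h1 n1)))
            \<partial>(cn_std \<Otimes>\<^sub>M cn_std)) = ennreal (cgauss_density V (fst y - a * h1) * cgauss_density V (snd y - a * e * h1))"
      unfolding split V_def using \<sigma> by (intro nn_integral_cn_std_pair_cgauss_density) simp
  qed
  also have "\<dots> = ennreal (relay_density_given_fading c1 c2 \<sigma> e y ((cmod h2)^2))"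
  proof -
    have ca: "cmod (a * e) = cmod a" and ca2: "(cmod a)^2 = c1^2 * (cmod h2)^2"
      using e s0 by (simp_all del: of_real_mult add: a_def norm_mult power_mult_distrib)
    have cV: "V = \<sigma>^2 + c2^2 * (cmod h2)^2"
      unfolding V_def by (simp del: of_real_mult add: norm_mult power_mult_distrib)
    have "(cmod (cnj a * fst y + cnj (a * e) * snd y))^2 = (cmod (complex_of_real c1 * h2))^2 * (cmod (snd y + e * fst y))^2"
      unfolding a_def by (rule cmod_matched_filter_power2[OF s0 e])
    then have matched: "(cmod (cnj a * fst y + cnj (a * e) * snd y))^2 = c1^2 * (cmod h2)^2 * (cmod (snd y + e * fst y))^2"
      by (simp del: of_real_mult add: norm_mult power_mult_distrib)
    show ?thesis
      unfolding nn_integral_cn_std_cgauss_density_common_fading[OF V ca]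
      unfolding matched ca2 cV relay_density_given_fading_def
      by (simp add: mult.assoc)
  qed
  finally show ?thesis .
qed

lemma distr_relay_link:
  assumes \<sigma>: "\<sigma> > 0" and s0: "cmod s0 = 1" and e: "cmod e = 1"
  shows "distr link_noise lborel (relay_link c1 c2 \<sigma> (s0, s0 * e)) = density lborel (\<lambda>y. ennreal (relay_density c1 c2 \<sigma> e y))"
proof (rule distr_eq_densityI)
  interpret C: prob_space cn_std
    by (rule prob_space_cn_std)
  interpret C2: prob_space "cn_std \<Otimes>\<^sub>M cn_std"
    by (rule prob_space_cn_std_pair)
  interpret LC: pair_sigma_finite lborel cn_std
    by (simp add: pair_sigma_finite_def C.sigma_finite_measure_axioms lborel.sigma_finite_measure_axioms)
  interpret CC: pair_sigma_finite cn_std cn_std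
    by (simp add: pair_sigma_finite_def C.sigma_finite_measure_axioms)
  define \<mu> where "\<mu> h1 h2 n1 = (complex_of_real c1 * h2 * s0 * h1 + complex_of_real c2 * h2 * fst n1,
                               complex_of_real c1 * h2 * s0 * e * h1 + complex_of_real c2 * h2 * snd n1)"
    for h1 h2 :: complex and n1 :: "complex \<times> complex"
  let ?Q = "\<lambda>y h1 h2 n1. ennreal (cgauss_density (\<sigma>^2) (fst y - fst (\<mu> h1 h2 n1)) * cgauss_density (\<sigma>^2) (snd y - snd (\<mu> h1 h2 n1)))"
  have link: "relay_link c1 c2 \<sigma> (s0, s0 * e) (h1, h2, n1, n2) = \<mu> h1 h2 n1 + \<sigma> *\<^sub>R n2" for h1 h2 n1 n2
    by (cases n1, cases n2) (simp add: relay_link_def csc_def \<mu>_def scaleR_conv_of_real algebra_simps)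
  fix \<psi> :: "complex \<times> complex \<Rightarrow> ennreal"
  assume [measurable]: "\<psi> \<in> borel_measurable borel"
  have "(\<integral>\<^sup>+\<omega>. \<psi> (relay_link c1 c2 \<sigma> (s0, s0 * e) \<omega>) \<partial>link_noise)
      = (\<integral>\<^sup>+h1. \<integral>\<^sup>+h2. \<integral>\<^sup>+n1. \<integral>\<^sup>+n2. \<psi> (\<mu> h1 h2 n1 + \<sigma> *\<^sub>R n2) \<partial>(cn_std \<Otimes>\<^sub>M cn_std) \<partial>(cn_std \<Otimes>\<^sub>M cn_std) \<partial>cn_std \<partial>cn_std)"
    by (subst nn_integral_link_noise) (simp_all add: link)
  also have "\<dots> = (\<integral>\<^sup>+h2. \<integral>\<^sup>+h1. \<integral>\<^sup>+n1. \<integral>\<^sup>+n2. \<psi> (\<mu> h1 h2 n1 + \<sigma> *\<^sub>R n2) \<partial>(cn_std \<Otimes>\<^sub>M cn_std) \<partial>(cn_std \<Otimes>\<^sub>M cn_std) \<partial>cn_std \<partial>cn_std)"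
    by (rule CC.Fubini') (simp add: \<mu>_def, measurable)
  also have "\<dots> = (\<integral>\<^sup>+h2. \<integral>\<^sup>+h1. \<integral>\<^sup>+y. (\<integral>\<^sup>+n1. ?Q y h1 h2 n1 \<partial>(cn_std \<Otimes>\<^sub>M cn_std)) * \<psi> y \<partial>lborel \<partial>cn_std \<partial>cn_std)"
    using \<sigma> by (intro nn_integral_cong nn_integral_shifted_cn_std_pair C2.sigma_finite_measure_axioms)
      (simp_all add: \<mu>_def)
  also have "\<dots> = (\<integral>\<^sup>+h2. \<integral>\<^sup>+y. \<integral>\<^sup>+h1. (\<integral>\<^sup>+n1. ?Q y h1 h2 n1 \<partial>(cn_std \<Otimes>\<^sub>M cn_std)) * \<psi> y \<partial>cn_std \<partial>lborel \<partial>cn_std)"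
    by (intro nn_integral_cong LC.Fubini') (simp add: \<mu>_def, measurable)
  also have "\<dots> = (\<integral>\<^sup>+y. \<integral>\<^sup>+h2. \<integral>\<^sup>+h1. (\<integral>\<^sup>+n1. ?Q y h1 h2 n1 \<partial>(cn_std \<Otimes>\<^sub>M cn_std)) * \<psi> y \<partial>cn_std \<partial>cn_std \<partial>lborel)"
    by (rule LC.Fubini') (simp add: \<mu>_def, measurable)
  also have "\<dots> = (\<integral>\<^sup>+y. (\<integral>\<^sup>+h2. \<integral>\<^sup>+h1. \<integral>\<^sup>+n1. ?Q y h1 h2 n1 \<partial>(cn_std \<Otimes>\<^sub>M cn_std) \<partial>cn_std \<partial>cn_std) * \<psi> y \<partial>lborel)"
    by (intro nn_integral_cong trans[OF nn_integral_cong nn_integral_multc] nn_integral_multc)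
      (simp_all add: \<mu>_def, measurable)
  also have "\<dots> = (\<integral>\<^sup>+y. ennreal (relay_density c1 c2 \<sigma> e y) * \<psi> y \<partial>lborel)"
    unfolding \<mu>_def nn_integral_relay_given_rd_fading[OF \<sigma> s0 e]
    by (simp add: nn_integral_cn_std_relay_density_given_fading[OF \<sigma> e])
  finally show "(\<integral>\<^sup>+\<omega>. \<psi> (relay_link c1 c2 \<sigma> (s0, s0 * e) \<omega>) \<partial>link_noise)
      = (\<integral>\<^sup>+y. ennreal (relay_density c1 c2 \<sigma> e y) * \<psi> y \<partial>lborel)" .
qed simp_all

section \<open>Independent links\<close>

lemma distr_PiM_restrict_components:
  fixes G :: "'i \<Rightarrow> 'a \<Rightarrow> 'b::euclidean_space"
  assumes I: "finite I" and L: "prob_space L" and G[measurable]: "\<And>i. G i \<in> measurable L borel"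
  shows "distr (PiM I (\<lambda>_. L)) (PiM I (\<lambda>_. lborel)) (\<lambda>\<omega>. \<lambda>i\<in>I. G i (\<omega> i)) = PiM I (\<lambda>i. distr L lborel (G i))"
proof -
  interpret L: prob_space L by fact
  interpret PL: product_prob_space "\<lambda>_. L" by unfold_locales
  have pd: "prob_space (distr L lborel (G i))" for i by (rule L.prob_space_distr) simp
  interpret N: product_sigma_finite "\<lambda>i. distr L lborel (G i)"
    unfolding product_sigma_finite_def using pd prob_space_imp_sigma_finite by blast
  have Fm: "(\<lambda>\<omega>. \<lambda>i\<in>I. G i (\<omega> i)) \<in> measurable (PiM I (\<lambda>_. L)) (PiM I (\<lambda>_. lborel))"
    by (rule measurable_restrict) measurable
  show ?thesis
  proof (rule N.PiM_eqI[OF I])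
    show "sets (distr (PiM I (\<lambda>_. L)) (PiM I (\<lambda>_. lborel)) (\<lambda>\<omega>. \<lambda>i\<in>I. G i (\<omega> i))) = sets (PiM I (\<lambda>i. distr L lborel (G i)))"
      by (simp cong: sets_PiM_cong)
    fix A assume A: "\<And>i. i \<in> I \<Longrightarrow> A i \<in> sets (distr L lborel (G i))"
    then have A': "\<And>i. i \<in> I \<Longrightarrow> A i \<in> sets borel" by simp
    have pre: "(\<lambda>\<omega>. \<lambda>i\<in>I. G i (\<omega> i)) -` PiE I A \<inter> space (PiM I (\<lambda>_. L)) = PiE I (\<lambda>i. G i -` A i \<inter> space L)"
      by (auto simp: space_PiM PiE_iff)
    have "emeasure (distr (PiM I (\<lambda>_. L)) (PiM I (\<lambda>_. lborel)) (\<lambda>\<omega>. \<lambda>i\<in>I. G i (\<omega> i))) (PiE I A)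
        = emeasure (PiM I (\<lambda>_. L)) (PiE I (\<lambda>i. G i -` A i \<inter> space L))"
      using A' by (subst emeasure_distr[OF Fm]) (auto simp: pre sets_PiM_I_finite I)
    also have "\<dots> = (\<Prod>i\<in>I. emeasure L (G i -` A i \<inter> space L))"
      using A' by (intro PL.emeasure_PiM I) (auto intro: measurable_sets)
    also have "\<dots> = (\<Prod>i\<in>I. emeasure (distr L lborel (G i)) (A i))"
      using A' by (intro prod.cong refl) (simp add: emeasure_distr)
    finally show "emeasure (distr (PiM I (\<lambda>_. L)) (PiM I (\<lambda>_. lborel)) (\<lambda>\<omega>. \<lambda>i\<in>I. G i (\<omega> i))) (PiE I A)
        = (\<Prod>i\<in>I. emeasure (distr L lborel (G i)) (A i))" .
  qed
qed

lemma indicator_PiE_eq_prod: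
  assumes "x \<in> extensional I" "finite I"
  shows "(indicator (PiE I A) x :: ennreal) = (\<Prod>i\<in>I. indicator (A i) (x i))"
proof (cases "\<forall>i\<in>I. x i \<in> A i")
  case True
  then show ?thesis using assms by (simp add: indicator_def PiE_iff)
next
  case False
  then obtain i where "i \<in> I" "x i \<notin> A i" by auto
  then show ?thesis using assms by (auto simp: indicator_def PiE_iff prod_zero_iff)
qed

lemma PiM_density_lborel:
  fixes d :: "'i \<Rightarrow> 'b::euclidean_space \<Rightarrow> ennreal"
  assumes I: "finite I" and d[measurable]: "\<And>i. d i \<in> borel_measurable borel"
    and sf: "\<And>i. sigma_finite_measure (density lborel (d i))"
  shows "PiM I (\<lambda>i. density lborel (d i)) = density (PiM I (\<lambda>_. lborel)) (\<lambda>y. \<Prod>i\<in>I. d i (y i))"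
proof -
  interpret D: product_sigma_finite "\<lambda>i. density lborel (d i)"
    unfolding product_sigma_finite_def using sf by blast
  interpret LB: product_sigma_finite "\<lambda>_. lborel :: 'b measure"
    unfolding product_sigma_finite_def by (simp add: lborel.sigma_finite_measure_axioms)
  show ?thesis
  proof (rule D.PiM_eqI[OF I, symmetric])
    show "sets (density (PiM I (\<lambda>_. lborel)) (\<lambda>y. \<Prod>i\<in>I. d i (y i))) = sets (PiM I (\<lambda>i. density lborel (d i)))"
      by (simp cong: sets_PiM_cong)
    fix A assume A: "\<And>i. i \<in> I \<Longrightarrow> A i \<in> sets (density lborel (d i))"
    then have [measurable]: "\<And>i. i \<in> I \<Longrightarrow> A i \<in> sets borel" by simp
    have PA: "PiE I A \<in> sets (PiM I (\<lambda>_. lborel :: 'b measure))"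
      using A by (intro sets_PiM_I_finite I) auto
    have "emeasure (density (PiM I (\<lambda>_. lborel)) (\<lambda>y. \<Prod>i\<in>I. d i (y i))) (PiE I A)
        = (\<integral>\<^sup>+y. (\<Prod>i\<in>I. d i (y i)) * indicator (PiE I A) y \<partial>PiM I (\<lambda>_. lborel))"
      using PA by (subst emeasure_density) auto
    also have "\<dots> = (\<integral>\<^sup>+y. (\<Prod>i\<in>I. d i (y i) * indicator (A i) (y i)) \<partial>PiM I (\<lambda>_. lborel))"
      by (intro nn_integral_cong) (auto simp: indicator_PiE_eq_prod I space_PiM PiE_iff prod.distrib)
    also have "\<dots> = (\<Prod>i\<in>I. (\<integral>\<^sup>+x. d i x * indicator (A i) x \<partial>lborel))"
      by (rule LB.product_nn_integral_prod[OF I]) measurable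
    also have "\<dots> = (\<Prod>i\<in>I. emeasure (density lborel (d i)) (A i))"
      by (intro prod.cong refl) (subst emeasure_density, auto)
    finally show "emeasure (density (PiM I (\<lambda>_. lborel)) (\<lambda>y. \<Prod>i\<in>I. d i (y i))) (PiE I A) = (\<Prod>i\<in>I. emeasure (density lborel (d i)) (A i))" .
  qed
qed

section \<open>The relay network\<close>

locale relay_network =
  fixes M K :: nat and s0 :: complex and g0d s0d :: real and g0r s0r grd srd :: "nat \<Rightarrow> real"
  assumes s0: "cmod s0 = 1" and g0d: "g0d > 0" and s0d: "s0d > 0"
    and relay_params: "\<forall>r\<in>{1..K}. g0r r > 0 \<and> s0r r > 0 \<and> grd r > 0 \<and> srd r > 0"
begin

definition phase :: "nat \<Rightarrow> complex" where
  "phase m = cis (2 * pi * real m / real M)"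

definition link :: "nat \<Rightarrow> nat \<Rightarrow> complex \<times> complex \<times> (complex \<times> complex) \<times> (complex \<times> complex) \<Rightarrow> complex \<times> complex" where
  "link m i = (if i = 0 then direct_link g0d s0d (s0, s0 * phase m)
     else relay_link (s0r i * srd i * sqrt (g0r i * grd i)) (s0r i * srd i * sqrt (grd i)) (srd i) (s0, s0 * phase m))"

definition link_density :: "nat \<Rightarrow> nat \<Rightarrow> complex \<times> complex \<Rightarrow> real" where
  "link_density m i = (if i = 0 then direct_density g0d s0d (phase m)
     else relay_density (s0r i * srd i * sqrt (g0r i * grd i)) (s0r i * srd i * sqrt (grd i)) (srd i) (phase m))"

lemma obs_eq_link: "obs M K s0 g0d s0d g0r s0r grd srd m = (\<lambda>\<omega>. \<lambda>i\<in>{0..K}. link m i (\<omega> i))"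
  unfolding obs_def link_def direct_link_def relay_link_def symb_def phase_def
  by (auto simp: fun_eq_iff split: prod.split)

lemma measurable_link[measurable]: "link m i \<in> measurable link_noise borel"
  by (cases "i = 0") (simp_all add: link_def)

lemma borel_measurable_link_density[measurable]: "link_density m i \<in> borel_measurable borel"
  by (cases "i = 0") (simp_all add: link_density_def)

lemma distr_link: "distr link_noise lborel (link m i) = density lborel (\<lambda>y. ennreal (link_density m i y))"
  if "i \<in> {0..K}"
proof (cases "i = 0")
  case True
  then show ?thesis
    unfolding link_def link_density_def using distr_direct_link[OF g0d s0d s0] by (simp add: phase_def)
next
  case False
  then have "srd i > 0"
    using that relay_params by auto
  then show ?thesis
    unfolding link_def link_density_def using False distr_relay_link[OF _ s0] by (simp add: phase_def)
qed

lemma link_density_pos: "link_density m i y > 0" if "i \<in> {0..K}"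
  using that relay_params unfolding link_density_def
  by (auto simp: direct_density_pos[OF g0d s0d] relay_density_pos)

lemma distr_obs:
  "distr (PiM {0..K} (\<lambda>_. link_noise)) (PiM {0..K} (\<lambda>_. lborel)) (obs M K s0 g0d s0d g0r s0r grd srd m)
     = density (PiM {0..K} (\<lambda>_. lborel)) (\<lambda>y. \<Prod>i\<in>{0..K}. ennreal (link_density m i (y i)))"
proof -
  define d where "d i = (if i \<in> {0..K} then (\<lambda>y. ennreal (link_density m i y)) else (\<lambda>_. 1))" for i
  have [measurable]: "d i \<in> borel_measurable borel" for i
    unfolding d_def by (cases "i \<in> {0..K}") simp_all
  have "sigma_finite_measure (density lborel (d i))" for i
  proof (cases "i \<in> {0..K}")
    case True
    interpret prob_space link_noise
      by (rule prob_space_link_noise)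
    have "prob_space (distr link_noise lborel (link m i))"
      by (rule prob_space_distr) simp
    then show ?thesis
      using True by (simp add: d_def distr_link prob_space_imp_sigma_finite)
  qed (simp add: d_def density_1 lborel.sigma_finite_measure_axioms)
  then have "PiM {0..K} (\<lambda>i. density lborel (d i)) = density (PiM {0..K} (\<lambda>_. lborel)) (\<lambda>y. \<Prod>i\<in>{0..K}. d i (y i))"
    by (intro PiM_density_lborel) simp_all
  moreover have "PiM {0..K} (\<lambda>i. distr link_noise lborel (link m i)) = PiM {0..K} (\<lambda>i. density lborel (d i))"
    by (intro PiM_cong) (simp_all add: d_def distr_link)
  ultimately show ?thesis
    unfolding obs_eq_link using prob_space_link_noise
    by (subst distr_PiM_restrict_components) (auto simp: d_def intro!: arg_cong[where f="density _"] prod.cong)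
qed

lemma link_density_relay:
  assumes r: "r \<in> {1..K}"
  shows "link_density m r y = 1 / (pi^2 * (srd r)^4) *
    exp (ln (Ifun ((s0r r)^2 * grd r) ((1 + 2 * g0r r) * (s0r r)^2 * grd r)
               ((cmod (snd y - fst y * phase m))^2 / (2 * (srd r)^2))
               ((cmod (snd y + fst y * phase m))^2 / (2 * (srd r)^2)) 1))"
proof -
  have pos: "g0r r > 0" "s0r r > 0" "grd r > 0" "srd r > 0"
    using r relay_params by auto
  have "(s0r r * srd r * sqrt (grd r))^2 / (srd r)^2 = (s0r r)^2 * grd r"
    and "((s0r r * srd r * sqrt (grd r))^2 + 2 * (s0r r * srd r * sqrt (g0r r * grd r))^2) / (srd r)^2
        = (1 + 2 * g0r r) * (s0r r)^2 * grd r"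
    using pos by (simp_all add: power_mult_distrib field_simps)
  moreover have "Ifun ((s0r r)^2 * grd r) ((1 + 2 * g0r r) * (s0r r)^2 * grd r)
      ((cmod (snd y - fst y * phase m))^2 / (2 * (srd r)^2)) ((cmod (snd y + fst y * phase m))^2 / (2 * (srd r)^2)) 1 > 0"
    using pos by (intro Ifun_pos) auto
  ultimately show ?thesis
    using r unfolding link_density_def relay_density_def by simp
qed

definition likelihood_scale :: "(nat \<Rightarrow> complex \<times> complex) \<Rightarrow> real" where
  "likelihood_scale y = direct_density g0d s0d 0 (y 0) * (\<Prod>r\<in>{1..K}. 1 / (pi^2 * (srd r)^4))"

lemma likelihood_scale_pos: "likelihood_scale y > 0"
  unfolding likelihood_scale_def using relay_params
  by (auto intro!: mult_pos_pos prod_pos direct_density_pos[OF g0d s0d])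

lemma prod_link_density_eq_metric:
  "(\<Prod>i\<in>{0..K}. link_density m i (y i)) = likelihood_scale y * exp (metric M K g0d s0d g0r s0r grd srd m y)"
proof -
  have "(\<Prod>i\<in>{0..K}. link_density m i (y i)) = link_density m 0 (y 0) * (\<Prod>r\<in>{1..K}. link_density m r (y r))"
    by (simp add: prod.atLeast_Suc_atMost)
  also have "(\<Prod>r\<in>{1..K}. link_density m r (y r)) = (\<Prod>r\<in>{1..K}. 1 / (pi^2 * (srd r)^4) *
      exp (ln (Ifun ((s0r r)^2 * grd r) ((1 + 2 * g0r r) * (s0r r)^2 * grd r)
               ((cmod (snd (y r) - fst (y r) * phase m))^2 / (2 * (srd r)^2))
               ((cmod (snd (y r) + fst (y r) * phase m))^2 / (2 * (srd r)^2)) 1)))"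
    by (intro prod.cong refl link_density_relay)
  also have "\<dots> = (\<Prod>r\<in>{1..K}. 1 / (pi^2 * (srd r)^4)) *
      exp (\<Sum>r = 1..K. ln (Ifun ((s0r r)^2 * grd r) ((1 + 2 * g0r r) * (s0r r)^2 * grd r)
               ((cmod (snd (y r) - fst (y r) * phase m))^2 / (2 * (srd r)^2))
               ((cmod (snd (y r) + fst (y r) * phase m))^2 / (2 * (srd r)^2)) 1))"
    by (simp only: prod.distrib exp_sum[OF finite_atLeastAtMost])
  also have "link_density m 0 (y 0) = direct_density g0d s0d 0 (y 0) *
      exp (2 * g0d / (1 + 2 * g0d) * Re (fst (y 0) * cnj (snd (y 0)) * phase m) / s0d^2)"
    unfolding link_density_def if_P[OF refl] by (rule direct_density_factor)
  finally show ?thesis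
    unfolding likelihood_scale_def metric_def Let_def phase_def[symmetric] exp_add by (simp add: mult_ac)
qed

end

theorem theorem1:
  fixes M K :: nat and s0 :: complex and g0d s0d :: real
    and g0r s0r grd srd :: "nat \<Rightarrow> real"
    and f :: "nat \<Rightarrow> (nat \<Rightarrow> complex \<times> complex) \<Rightarrow> ennreal"
  assumes "M \<ge> 2" and "K \<ge> 1" and "cmod s0 = 1"
    and "g0d > 0" and "s0d > 0"
    and "\<forall>r\<in>{1..K}. g0r r > 0 \<and> s0r r > 0 \<and> grd r > 0 \<and> srd r > 0"
    and "\<forall>m<M. f m \<in> borel_measurable (PiM {0..K} (\<lambda>_. lborel))"
    and "\<forall>m<M. distr (PiM {0..K} (\<lambda>_. link_noise)) (PiM {0..K} (\<lambda>_. lborel))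
                     (obs M K s0 g0d s0d g0r s0r grd srd m)
               = density (PiM {0..K} (\<lambda>_. lborel)) (f m)"
  shows "AE y in PiM {0..K} (\<lambda>_. lborel).
           {m \<in> {0..<M}. \<forall>m'\<in>{0..<M}. f m' y \<le> f m y}
         = {m \<in> {0..<M}. \<forall>m'\<in>{0..<M}.
              metric M K g0d s0d g0r s0r grd srd m' y \<le> metric M K g0d s0d g0r s0r grd srd m y}"
proof -
  interpret relay_network M K s0 g0d s0d g0r s0r grd srd
    using assms(3-6) by unfold_locales
  interpret finite_product_sigma_finite "\<lambda>_. lborel" "{0..K}"
    by unfold_locales (auto simp: lborel.sigma_finite_measure_axioms)
  let ?likelihood = "\<lambda>m y. \<Prod>i\<in>{0..K}. ennreal (link_density m i (y i))"
  have "AE y in PiM {0..K} (\<lambda>_. lborel). f m y = ?likelihood m y" if "m \<in> {0..<M}" for m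
    using that assms(7,8) distr_obs[of m] by (intro density_unique) auto
  then have "AE y in PiM {0..K} (\<lambda>_. lborel). \<forall>m\<in>{0..<M}. f m y = ?likelihood m y"
    by (intro AE_finite_allI) auto
  moreover have "?likelihood m y = ennreal (likelihood_scale y * exp (metric M K g0d s0d g0r s0r grd srd m y))" for m y
    unfolding prod_link_density_eq_metric[symmetric] using link_density_pos by (intro prod_ennreal less_imp_le) simp
  moreover have "ennreal (likelihood_scale y * exp a) \<le> ennreal (likelihood_scale y * exp b) \<longleftrightarrow> a \<le> b" for y a b
    using likelihood_scale_pos[of y] by (simp add: ennreal_le_iff mult_le_cancel_left_pos)
  ultimately show ?thesis
    by (auto elim!: eventually_mono)
qed

end
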